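(* There exist finite-dimensional real representations $V$ and $U$ of $SL(2,\mathbb{R})$, an $SL(2,\mathbb{R})$-invariant subset $D\subseteq V$, a continuous $SL(2,\mathbb{R})$-equivariant function $F:D\to U$, and a compact subset $K\subseteq D$ such that there is no sequence of functions of the form $h_k\cdot P_k$, with $P_k:V\to U$ an $SL(2,\mathbb{R})$-equivariant polynomial map and $h_k:D\to\mathbb{R}$ an $SL(2,\mathbb{R})$-invariant function, that converges pointwise to $F$ on $K$.
   Context: A map $F$ between sets on which $SL(2,\mathbb{R})$ acts (linearly on representations) is equivariant if $F(g\cdot v)=g\cdot F(v)$ for all $g\in SL(2,\mathbb{R})$ and $v$ in its domain; a real-valued function $h$ is invariant if $h(g\cdot v)=h(v)$. *)

theory Defs
  imports "HOL-Analysis.Analysis"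
begin

definition SL2 :: "(real^2^2) set" where
  "SL2 = {g. det g = 1}"

text \<open>An n-dimensional real vector space R^n, realised as functions
  nat => real vanishing from index n on (topology: product topology,
  which on this subspace is the Euclidean topology).\<close>
definition vspace :: "nat \<Rightarrow> (nat \<Rightarrow> real) set" where
  "vspace n = {v. \<forall>i\<ge>n. v i = 0}"

definition act :: "nat \<Rightarrow> (nat \<Rightarrow> nat \<Rightarrow> real) \<Rightarrow> (nat \<Rightarrow> real) \<Rightarrow> (nat \<Rightarrow> real)" where
  "act n A v = (\<lambda>i. if i < n then (\<Sum>j<n. A i j * v j) else 0)"

definition is_rep :: "nat \<Rightarrow> (real^2^2 \<Rightarrow> nat \<Rightarrow> nat \<Rightarrow> real) \<Rightarrow> bool" where
  "is_rep n \<rho> \<longleftrightarrow>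
     (\<forall>v\<in>vspace n. act n (\<rho> (mat 1)) v = v) \<and>
     (\<forall>g\<in>SL2. \<forall>h\<in>SL2. \<forall>v\<in>vspace n.
        act n (\<rho> (g ** h)) v = act n (\<rho> g) (act n (\<rho> h) v)) \<and>
     (\<forall>i<n. \<forall>j<n. continuous_on SL2 (\<lambda>g. \<rho> g i j))"

inductive poly_fun :: "nat \<Rightarrow> ((nat \<Rightarrow> real) \<Rightarrow> real) \<Rightarrow> bool" for n where
  pf_const: "poly_fun n (\<lambda>v. c)"
| pf_coord: "i < n \<Longrightarrow> poly_fun n (\<lambda>v. v i)"
| pf_add: "poly_fun n p \<Longrightarrow> poly_fun n q \<Longrightarrow> poly_fun n (\<lambda>v. p v + q v)"
| pf_mult: "poly_fun n p \<Longrightarrow> poly_fun n q \<Longrightarrow> poly_fun n (\<lambda>v. p v * q v)"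

definition poly_map :: "nat \<Rightarrow> nat \<Rightarrow> ((nat \<Rightarrow> real) \<Rightarrow> (nat \<Rightarrow> real)) \<Rightarrow> bool" where
  "poly_map n m P \<longleftrightarrow>
     (\<forall>v\<in>vspace n. P v \<in> vspace m) \<and> (\<forall>i<m. poly_fun n (\<lambda>v. P v i))"

end

theory Submission
  imports Defs
begin

text \<open>Take V = R^2 \<oplus> R^2 (two copies of the standard representation), U = R^2 with the
  trivial action, D the union of the two punctured planes, F the locally constant map that is
  (1, 0) on the first plane and (0, 1) on the second, and K = {e0, e2}. An equivariant
  polynomial map P into the trivial representation is invariant, in particular under
  diag(t, 1/t), which scales e0 and e2 by t; letting t \<rightarrow> 0, continuity gives
  P e0 = P 0 = P e2. Hence h(e0) P(e0) and h(e2) P(e2) are parallel, so their determinant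
  vanishes identically, while it would have to tend to det(F e0, F e2) = 1.\<close>

lemma continuous_on_coordinate [continuous_intros]:
  "continuous_on S (\<lambda>x::'a \<Rightarrow> 'b::topological_space. x i)"
  by (rule continuous_on_subset[OF continuous_on_product_coordinates]) simp

lemma poly_fun_continuous: "poly_fun n p \<Longrightarrow> continuous_on UNIV p"
  by (induction rule: poly_fun.induct) (auto intro!: continuous_intros)

lemma poly_fun_eq_origin_if_scaling_invariant:
  fixes v :: "nat \<Rightarrow> real"
  assumes p: "poly_fun n p" and scale: "\<And>t. t > 0 \<Longrightarrow> p (\<lambda>i. t * v i) = p v"
  shows "p v = p (\<lambda>i. 0)"
proof -
  have "continuous_on UNIV (\<lambda>t::real. \<lambda>i. t * v i)"
    by (intro continuous_intros)
  then have "isCont (\<lambda>t. p (\<lambda>i. t * v i)) 0"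
    using poly_fun_continuous[OF p] continuous_on_compose2
    by (metis continuous_on_eq_continuous_at open_UNIV subset_UNIV UNIV_I)
  then have "((\<lambda>t. p (\<lambda>i. t * v i)) \<longlongrightarrow> p (\<lambda>i. 0)) (at_right 0)"
    by (simp add: isCont_def filterlim_at_split)
  moreover have "eventually (\<lambda>t. p (\<lambda>i. t * v i) = p v) (at_right 0)"
    using eventually_at_right_less[of "0::real"] by (rule eventually_mono) (rule scale)
  then have "((\<lambda>t. p (\<lambda>i. t * v i)) \<longlongrightarrow> p v) (at_right 0)"
    by (rule tendsto_eventually)
  ultimately show ?thesis
    by (metis tendsto_unique trivial_limit_at_right_real)
qed

lemma poly_map_eq_origin_if_scaling_invariant:
  assumes P: "poly_map n m P" and v: "v \<in> vspace n"
    and scale: "\<And>t. t > 0 \<Longrightarrow> P (\<lambda>i. t * v i) = P v"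
  shows "P v = P (\<lambda>i. 0)"
proof
  fix i
  show "P v i = P (\<lambda>i. 0) i"
  proof (cases "i < m")
    case True
    with P have "poly_fun n (\<lambda>v. P v i)" by (simp add: poly_map_def)
    then show ?thesis
      by (rule poly_fun_eq_origin_if_scaling_invariant) (simp add: scale)
  next
    case False
    have "(\<lambda>i. 0) \<in> vspace n" by (simp add: vspace_def)
    with P v False show ?thesis by (simp add: poly_map_def vspace_def)
  qed
qed

lemma scalar_multiples_not_tendsto_basis:
  fixes a b :: "nat \<Rightarrow> real" and c :: "nat \<Rightarrow> nat \<Rightarrow> real"
  assumes a0: "(\<lambda>k. a k * c k 0) \<longlonglongrightarrow> 1" and a1: "(\<lambda>k. a k * c k 1) \<longlonglongrightarrow> 0"
    and b0: "(\<lambda>k. b k * c k 0) \<longlonglongrightarrow> 0" and b1: "(\<lambda>k. b k * c k 1) \<longlonglongrightarrow> 1"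
  shows False
proof -
  let ?det = "\<lambda>k. (a k * c k 0) * (b k * c k 1) - (a k * c k 1) * (b k * c k 0)"
  have "?det \<longlonglongrightarrow> 1 * 1 - 0 * 0"
    by (intro tendsto_intros a0 a1 b0 b1)
  moreover have "?det = (\<lambda>k. 0)"
    by (simp add: algebra_simps)
  ultimately show False
    using LIMSEQ_unique[OF tendsto_const] by fastforce
qed

lemma SL2_maps_nonzero_to_nonzero:
  assumes "g \<in> SL2" "a \<noteq> 0 \<or> b \<noteq> 0"
  shows "g$1$1 * a + g$1$2 * b \<noteq> 0 \<or> g$2$1 * a + g$2$2 * b \<noteq> 0"
proof (rule ccontr)
  assume "\<not> ?thesis"
  then have "g$1$1 * a + g$1$2 * b = 0" "g$2$1 * a + g$2$2 * b = 0"
    by simp_all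
  moreover have "g$1$1 * g$2$2 - g$1$2 * g$2$1 = 1"
    using assms(1) by (simp add: SL2_def det_2)
  ultimately have "a = 0" "b = 0"
    by algebra+
  with assms(2) show False by simp
qed

definition trivial_rep :: "real^2^2 \<Rightarrow> nat \<Rightarrow> nat \<Rightarrow> real" where
  "trivial_rep g i j = of_bool (i = j)"

lemma act_trivial_rep: "w \<in> vspace m \<Longrightarrow> act m (trivial_rep g) w = w"
  by (auto simp: act_def trivial_rep_def vspace_def fun_eq_iff)

lemma trivial_rep_is_rep: "is_rep m trivial_rep"
  by (simp add: is_rep_def act_trivial_rep trivial_rep_def)

definition sl2_entry :: "real^2^2 \<Rightarrow> nat \<Rightarrow> nat \<Rightarrow> real" where
  "sl2_entry g a b = g $ (if a = 0 then 1 else 2) $ (if b = 0 then 1 else 2)"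

definition two_planes_rep :: "real^2^2 \<Rightarrow> nat \<Rightarrow> nat \<Rightarrow> real" where
  "two_planes_rep g i j =
    (if i < 2 \<and> j < 2 then sl2_entry g i j
     else if 2 \<le> i \<and> i < 4 \<and> 2 \<le> j \<and> j < 4 then sl2_entry g (i - 2) (j - 2) else 0)"

lemma act_two_planes_rep:
  "act 4 (two_planes_rep g) v =
    (\<lambda>i. if i = 0 then g$1$1 * v 0 + g$1$2 * v 1
      else if i = 1 then g$2$1 * v 0 + g$2$2 * v 1
      else if i = 2 then g$1$1 * v 2 + g$1$2 * v 3
      else if i = 3 then g$2$1 * v 2 + g$2$2 * v 3 else 0)"
  by (simp add: act_def two_planes_rep_def sl2_entry_def fun_eq_iff eval_nat_numeral)

lemma two_planes_rep_is_rep: "is_rep 4 two_planes_rep"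
  unfolding is_rep_def
proof (intro conjI ballI allI impI)
  fix v :: "nat \<Rightarrow> real"
  assume "v \<in> vspace 4"
  then show "act 4 (two_planes_rep (mat 1)) v = v"
    unfolding act_two_planes_rep by (auto simp: mat_def vspace_def fun_eq_iff)
next
  fix g h :: "real^2^2" and v
  show "act 4 (two_planes_rep (g ** h)) v = act 4 (two_planes_rep g) (act 4 (two_planes_rep h) v)"
    by (simp add: act_two_planes_rep matrix_matrix_mult_def sum_2 fun_eq_iff algebra_simps)
next
  fix i j :: nat
  have entry: "continuous_on SL2 (\<lambda>g::real^2^2. g $ a $ b)" for a b
    by (intro continuous_intros)
  show "continuous_on SL2 (\<lambda>g. two_planes_rep g i j)"
    unfolding two_planes_rep_def sl2_entry_def
    by (cases "i < 2 \<and> j < 2"; cases "2 \<le> i \<and> i < 4 \<and> 2 \<le> j \<and> j < 4")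
      (simp_all only: if_True if_False simp_thms entry continuous_on_const)
qed

definition two_planes_domain :: "(nat \<Rightarrow> real) set" where
  "two_planes_domain = {v \<in> vspace 4.
     (v 2 = 0 \<and> v 3 = 0 \<and> (v 0 \<noteq> 0 \<or> v 1 \<noteq> 0)) \<or>
     (v 0 = 0 \<and> v 1 = 0 \<and> (v 2 \<noteq> 0 \<or> v 3 \<noteq> 0))}"

text \<open>Locally constant on the domain, but written as a quotient of polynomials so that its
  continuity there is evident.\<close>
definition plane_indicator :: "(nat \<Rightarrow> real) \<Rightarrow> nat \<Rightarrow> real" where
  "plane_indicator v =
    (\<lambda>i. if i = 0 then ((v 0)\<^sup>2 + (v 1)\<^sup>2) / ((v 0)\<^sup>2 + (v 1)\<^sup>2 + (v 2)\<^sup>2 + (v 3)\<^sup>2)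
      else if i = 1 then ((v 2)\<^sup>2 + (v 3)\<^sup>2) / ((v 0)\<^sup>2 + (v 1)\<^sup>2 + (v 2)\<^sup>2 + (v 3)\<^sup>2)
      else 0)"

lemma plane_indicator_first:
  "v 2 = 0 \<Longrightarrow> v 3 = 0 \<Longrightarrow> v 0 \<noteq> 0 \<or> v 1 \<noteq> 0 \<Longrightarrow>
    plane_indicator v = (\<lambda>i. if i = 0 then 1 else 0)"
  by (auto simp: plane_indicator_def fun_eq_iff add_nonneg_eq_0_iff)

lemma plane_indicator_second:
  "v 0 = 0 \<Longrightarrow> v 1 = 0 \<Longrightarrow> v 2 \<noteq> 0 \<or> v 3 \<noteq> 0 \<Longrightarrow>
    plane_indicator v = (\<lambda>i. if i = 1 then 1 else 0)"
  by (auto simp: plane_indicator_def fun_eq_iff add_nonneg_eq_0_iff)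

lemma plane_indicator_in_vspace: "plane_indicator v \<in> vspace 2"
  by (simp add: plane_indicator_def vspace_def)

lemma continuous_on_plane_indicator: "continuous_on two_planes_domain plane_indicator"
proof (rule continuous_on_coordinatewise_then_product)
  fix i
  have nonzero: "(v 0)\<^sup>2 + (v 1)\<^sup>2 + (v 2)\<^sup>2 + (v 3)\<^sup>2 \<noteq> 0" if "v \<in> two_planes_domain" for v
    using that by (auto simp: two_planes_domain_def add_nonneg_eq_0_iff)
  show "continuous_on two_planes_domain (\<lambda>v. plane_indicator v i)"
    unfolding plane_indicator_def
    by (cases "i = 0"; cases "i = 1")
      (auto intro!: continuous_intros simp: nonzero nonzero[unfolded One_nat_def])
qed

lemma two_planes_domain_invariant:
  assumes g: "g \<in> SL2" and v: "v \<in> two_planes_domain"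
  shows "act 4 (two_planes_rep g) v \<in> two_planes_domain \<and>
    plane_indicator (act 4 (two_planes_rep g) v) = plane_indicator v"
proof -
  from v consider "v 2 = 0" "v 3 = 0" "v 0 \<noteq> 0 \<or> v 1 \<noteq> 0"
    | "v 0 = 0" "v 1 = 0" "v 2 \<noteq> 0 \<or> v 3 \<noteq> 0"
    unfolding two_planes_domain_def by blast
  then show ?thesis
  proof cases
    case 1
    with SL2_maps_nonzero_to_nonzero[OF g, of "v 0" "v 1"] show ?thesis
      by (auto simp: two_planes_domain_def vspace_def act_two_planes_rep plane_indicator_first)
  next
    case 2
    with SL2_maps_nonzero_to_nonzero[OF g, of "v 2" "v 3"] show ?thesis
      by (auto simp: two_planes_domain_def vspace_def act_two_planes_rep plane_indicator_second)
  qed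
qed

definition diag_SL2 :: "real \<Rightarrow> real^2^2" where
  "diag_SL2 t = (\<chi> i j. if i = j then (if i = 1 then t else 1 / t) else 0)"

lemma diag_SL2_in_SL2: "t \<noteq> 0 \<Longrightarrow> diag_SL2 t \<in> SL2"
  by (simp add: SL2_def det_2 diag_SL2_def)

lemma act_diag_SL2_scales:
  assumes "v \<in> vspace 4" "v 1 = 0" "v 3 = 0"
  shows "act 4 (two_planes_rep (diag_SL2 t)) v = (\<lambda>i. t * v i)"
  using assms by (auto simp: act_two_planes_rep diag_SL2_def vspace_def fun_eq_iff)

definition e0 :: "nat \<Rightarrow> real" where
  "e0 = (\<lambda>i. if i = 0 then 1 else 0)"

definition e2 :: "nat \<Rightarrow> real" where
  "e2 = (\<lambda>i. if i = 2 then 1 else 0)"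

lemma no_pointwise_approximation_by_equivariant_polys:
  fixes h :: "nat \<Rightarrow> (nat \<Rightarrow> real) \<Rightarrow> real" and P :: "nat \<Rightarrow> (nat \<Rightarrow> real) \<Rightarrow> nat \<Rightarrow> real"
  assumes poly: "\<And>k. poly_map 4 2 (P k)"
    and equivariant: "\<And>k g v. g \<in> SL2 \<Longrightarrow> v \<in> vspace 4 \<Longrightarrow>
      P k (act 4 (two_planes_rep g) v) = act 2 (trivial_rep g) (P k v)"
    and lim: "\<And>x i. x \<in> {e0, e2} \<Longrightarrow> (\<lambda>k. h k x * P k x i) \<longlonglongrightarrow> plane_indicator x i"
  shows False
proof -
  have invariant: "P k (act 4 (two_planes_rep g) v) = P k v" if "g \<in> SL2" "v \<in> vspace 4" for k g v
    using equivariant[OF that] act_trivial_rep poly that by (simp add: poly_map_def)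
  have on_scaled_lines: "P k v = P k (\<lambda>i. 0)" if v: "v \<in> vspace 4" "v 1 = 0" "v 3 = 0" for k v
  proof (rule poly_map_eq_origin_if_scaling_invariant[OF poly v(1)])
    fix t :: real
    assume "t > 0"
    then show "P k (\<lambda>i. t * v i) = P k v"
      using invariant[OF diag_SL2_in_SL2 v(1), of t k] act_diag_SL2_scales[OF v] by simp
  qed
  have "P k e2 = P k e0" for k
    using on_scaled_lines[of e0] on_scaled_lines[of e2] by (simp add: e0_def e2_def vspace_def)
  moreover have "plane_indicator e0 = (\<lambda>i. if i = 0 then 1 else 0)"
    by (rule plane_indicator_first) (simp_all add: e0_def)
  moreover have "plane_indicator e2 = (\<lambda>i. if i = 1 then 1 else 0)"
    by (rule plane_indicator_second) (simp_all add: e2_def)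
  ultimately show False
    using lim[of e0 0] lim[of e0 1] lim[of e2 0] lim[of e2 1]
    by (intro scalar_multiples_not_tendsto_basis[of "\<lambda>k. h k e0" "\<lambda>k. P k e0" "\<lambda>k. h k e2"])
      simp_all
qed

theorem corollary1:
  shows "\<exists>(n::nat) (m::nat) \<rho> \<sigma> D F K.
    is_rep n \<rho> \<and> is_rep m \<sigma> \<and>
    D \<subseteq> vspace n \<and> (\<forall>g\<in>SL2. \<forall>v\<in>D. act n (\<rho> g) v \<in> D) \<and>
    (\<forall>v\<in>D. F v \<in> vspace m) \<and> continuous_on D F \<and>
    (\<forall>g\<in>SL2. \<forall>v\<in>D. F (act n (\<rho> g) v) = act m (\<sigma> g) (F v)) \<and>
    compact K \<and> K \<subseteq> D \<and>
    \<not> (\<exists>(h :: nat \<Rightarrow> (nat \<Rightarrow> real) \<Rightarrow> real) P.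
          (\<forall>k. poly_map n m (P k) \<and>
               (\<forall>g\<in>SL2. \<forall>v\<in>vspace n. P k (act n (\<rho> g) v) = act m (\<sigma> g) (P k v)) \<and>
               (\<forall>g\<in>SL2. \<forall>v\<in>D. h k (act n (\<rho> g) v) = h k v)) \<and>
          (\<forall>x\<in>K. \<forall>i. (\<lambda>k. h k x * P k x i) \<longlonglongrightarrow> F x i))"
proof (rule exI[where x = 4], rule exI[where x = 2], rule exI[where x = two_planes_rep],
    rule exI[where x = trivial_rep], rule exI[where x = two_planes_domain],
    rule exI[where x = plane_indicator], rule exI[where x = "{e0, e2}"], intro conjI)
  show "two_planes_domain \<subseteq> vspace 4"
    by (auto simp: two_planes_domain_def)
  show "{e0, e2} \<subseteq> two_planes_domain"
    by (simp add: two_planes_domain_def vspace_def e0_def e2_def)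
  show "\<forall>g\<in>SL2. \<forall>v\<in>two_planes_domain.
      plane_indicator (act 4 (two_planes_rep g) v) = act 2 (trivial_rep g) (plane_indicator v)"
    by (simp add: two_planes_domain_invariant act_trivial_rep plane_indicator_in_vspace)
  show "compact {e0, e2}"
    by simp
qed (use two_planes_rep_is_rep trivial_rep_is_rep two_planes_domain_invariant
    plane_indicator_in_vspace continuous_on_plane_indicator
    no_pointwise_approximation_by_equivariant_polys in blast)+

end
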